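(* Let $N, M \ge 1$ be integers, let $\beta>0$, and let $\mathbf{X}_1,\dots,\mathbf{X}_M$ be real matrices with $\mathbf{X}_m\in\mathbb{R}^{N\times K_m}$. Define the sets of valid graph Laplacians $$\mathcal{L}^{(s)}=\{\mathbf{L}\in\mathbb{R}^{N\times N}:\ \mathbf{L}\succeq 0,\ \mathrm{tr}(\mathbf{L})=N,\ L_{ij}=L_{ji}\le 0\ (i\ne j),\ \mathbf{L}\mathbf{1}=\mathbf{0}\},$$ $$\mathcal{L}^{(t)}=\{\mathbf{L}\in\mathbb{R}^{M\times M}:\ \mathbf{L}\succeq 0,\ \mathrm{tr}(\mathbf{L})=M,\ L_{ij}=L_{ji}\le 0\ (i\ne j),\ \mathbf{L}\mathbf{1}=\mathbf{0}\}.$$ For spatial Laplacians $\mathbf{L}^{(s)}_1,\dots,\mathbf{L}^{(s)}_M\in\mathcal{L}^{(s)}$ and a temporal Laplacian $\mathbf{L}^{(t)}\in\mathcal{L}^{(t)}$, let $\tilde{\mathbf{X}}\in\mathbb{R}^{M\times N^2}$ be the matrix whose $m$-th row is $\mathrm{vec}(\mathbf{L}^{(s)}_m)^\top$, and consider the objective $$F\big(\{\mathbf{L}^{(s)}_m\}_{m=1}^M,\mathbf{L}^{(t)}\big)=\sum_{m=1}^{M}\mathrm{tr}\big(\mathbf{X}_m^\top \mathbf{L}^{(s)}_m \mathbf{X}_m\big)+\beta\sum_{m=1}^{M}\|\mathbf{L}^{(s)}_m\|_F^2+\mathrm{tr}\big(\tilde{\mathbf{X}}^\top \mathbf{L}^{(t)}\tilde{\mathbf{X}}\big)+\beta\|\mathbf{L}^{(t)}\|_F^2,$$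 to be minimized subject to $\mathbf{L}^{(s)}_m\in\mathcal{L}^{(s)}$ for all $m$ and $\mathbf{L}^{(t)}\in\mathcal{L}^{(t)}$. Writing $w^{(t)}_{ij}=-L^{(t)}_{ij}$ ($i\ne j$) for the temporal edge weights, one has $\mathrm{tr}(\tilde{\mathbf{X}}^\top \mathbf{L}^{(t)}\tilde{\mathbf{X}})=\sum_{i<j} w^{(t)}_{ij}\|\mathbf{L}^{(s)}_i-\mathbf{L}^{(s)}_j\|_F^2$. Consider the following block coordinate descent algorithm (SpaTeoGL): initialize $\{\mathbf{L}^{(s)}_m\}\subset\mathcal{L}^{(s)}$ and $\mathbf{L}^{(t)}\in\mathcal{L}^{(t)}$; then repeat: for $m=1,\dots,M$ in turn, replace $\mathbf{L}^{(s)}_m$ by a solution of $$\min_{\mathbf{L}^{(s)}_m\in\mathcal{L}^{(s)}}\ \mathrm{tr}\big(\mathbf{X}_m^\top \mathbf{L}^{(s)}_m \mathbf{X}_m\big)+\beta\|\mathbf{L}^{(s)}_m\|_F^2+\sum_{j\ne m} w^{(t)}_{mj}\|\mathbf{L}^{(s)}_m-\mathbf{L}^{(s)}_j\|_F^2$$ (with all other blocks held at their current values); then form $\tilde{\mathbf{X}}$ from the current spatial Laplacians and replace $\mathbf{L}^{(t)}$ by a solution of $$\min_{\mathbf{L}^{(t)}\in\mathcal{L}^{(t)}}\ \mathrm{tr}\big(\tilde{\mathbf{X}}^\top \mathbf{L}^{(t)}\tilde{\mathbf{X}}\big)+\beta\|\mathbf{L}^{(t)}\|_F^2.$$ Assume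 $\beta>0$ and that each of these block subproblems is solved exactly over the nonempty closed convex sets $\mathcal{L}^{(s)}$ and $\mathcal{L}^{(t)}$. Then the objective $F$ is non-increasing across the iterations of the algorithm; moreover, every limit point of the iterates is a stationary point of the constrained minimization of $F$; and each block update admits a unique minimizer.
   Context: $\mathbf{X}\succeq 0$ means $\mathbf{X}$ is positive semidefinite; $\|\cdot\|_F$ is the Frobenius norm; $\mathrm{vec}(\cdot)$ is column-wise vectorization; $\mathbf{1}$ is the all-ones vector. The matrices $\mathbf{X}_m$ are windows of a multichannel signal (rows indexed by $N$ electrodes); $\mathbf{L}^{(s)}_m$ is the Laplacian of a spatial graph on the $N$ electrodes for window $m$, and $\mathbf{L}^{(t)}$ is the Laplacian of a temporal graph on the $M$ windows. An "iteration" is one full pass consisting of the $M$ spatial updates followed by the temporal update. *)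

theory Defs
  imports Complex_Main
begin

text \<open>Matrices are represented explicitly as functions nat => nat => real; an
  n x n matrix is one whose entries outside the index range {0..<n} x {0..<n} vanish.\<close>

type_synonym mat = "nat \<Rightarrow> nat \<Rightarrow> real"

definition supported :: "nat \<Rightarrow> mat \<Rightarrow> bool" where
  "supported n A \<longleftrightarrow> (\<forall>i j. (n \<le> i \<or> n \<le> j) \<longrightarrow> A i j = 0)"

definition psd :: "nat \<Rightarrow> mat \<Rightarrow> bool" where
  "psd n A \<longleftrightarrow> (\<forall>x :: nat \<Rightarrow> real. 0 \<le> (\<Sum>i<n. \<Sum>j<n. x i * A i j * x j))"

definition mtrace :: "nat \<Rightarrow> mat \<Rightarrow> real" where
  "mtrace n A = (\<Sum>i<n. A i i)"

definition mmult :: "nat \<Rightarrow> mat \<Rightarrow> mat \<Rightarrow> mat" where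
  "mmult n A B = (\<lambda>i k. \<Sum>j<n. A i j * B j k)"

definition transp :: "mat \<Rightarrow> mat" where
  "transp A = (\<lambda>i j. A j i)"

definition frob_sq :: "nat \<Rightarrow> mat \<Rightarrow> real" where
  "frob_sq n A = (\<Sum>i<n. \<Sum>j<n. (A i j)\<^sup>2)"

definition lap_set :: "nat \<Rightarrow> mat set" where
  "lap_set n = {L. supported n L \<and> psd n L \<and> mtrace n L = real n \<and>
      (\<forall>i<n. \<forall>j<n. i \<noteq> j \<longrightarrow> L i j = L j i \<and> L i j \<le> 0) \<and>
      (\<forall>i<n. (\<Sum>j<n. L i j) = 0)}"

definition vec :: "nat \<Rightarrow> mat \<Rightarrow> nat \<Rightarrow> real" where
  "vec N A = (\<lambda>p. A (p mod N) (p div N))"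

definition Xtilde :: "nat \<Rightarrow> (nat \<Rightarrow> mat) \<Rightarrow> mat" where
  "Xtilde N Ls = (\<lambda>m p. vec N (Ls m) p)"

definition temporal_smooth :: "nat \<Rightarrow> nat \<Rightarrow> (nat \<Rightarrow> mat) \<Rightarrow> mat \<Rightarrow> real" where
  "temporal_smooth N M Ls Lt =
     mtrace (N * N) (mmult M (transp (Xtilde N Ls)) (mmult M Lt (Xtilde N Ls)))"

definition spatial_smooth :: "nat \<Rightarrow> nat \<Rightarrow> mat \<Rightarrow> mat \<Rightarrow> real" where
  "spatial_smooth N Km Xm L = mtrace Km (mmult N (transp Xm) (mmult N L Xm))"

definition objective ::
  "nat \<Rightarrow> nat \<Rightarrow> (nat \<Rightarrow> nat) \<Rightarrow> (nat \<Rightarrow> mat) \<Rightarrow> real \<Rightarrow> (nat \<Rightarrow> mat) \<Rightarrow> mat \<Rightarrow> real" where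
  "objective N M K X \<beta> Ls Lt =
     (\<Sum>m<M. spatial_smooth N (K m) (X m) (Ls m)) + \<beta> * (\<Sum>m<M. frob_sq N (Ls m))
     + temporal_smooth N M Ls Lt + \<beta> * frob_sq M Lt"

definition feasible :: "nat \<Rightarrow> nat \<Rightarrow> (nat \<Rightarrow> mat) \<Rightarrow> mat \<Rightarrow> bool" where
  "feasible N M Ls Lt \<longleftrightarrow> (\<forall>m<M. Ls m \<in> lap_set N) \<and> Lt \<in> lap_set M"

definition tweight :: "mat \<Rightarrow> nat \<Rightarrow> nat \<Rightarrow> real" where
  "tweight Lt i j = - Lt i j"

definition spatial_subobj ::
  "nat \<Rightarrow> nat \<Rightarrow> (nat \<Rightarrow> nat) \<Rightarrow> (nat \<Rightarrow> mat) \<Rightarrow> real \<Rightarrow> (nat \<Rightarrow> mat) \<Rightarrow> mat \<Rightarrow> nat \<Rightarrow> mat \<Rightarrow> real" where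
  "spatial_subobj N M K X \<beta> Ls Lt m L =
     spatial_smooth N (K m) (X m) L + \<beta> * frob_sq N L
     + (\<Sum>j\<in>{..<M} - {m}. tweight Lt m j * frob_sq N (\<lambda>a b. L a b - Ls j a b))"

definition temporal_subobj :: "nat \<Rightarrow> nat \<Rightarrow> real \<Rightarrow> (nat \<Rightarrow> mat) \<Rightarrow> mat \<Rightarrow> real" where
  "temporal_subobj N M \<beta> Ls L = temporal_smooth N M Ls L + \<beta> * frob_sq M L"

definition is_argmin :: "'a set \<Rightarrow> ('a \<Rightarrow> real) \<Rightarrow> 'a \<Rightarrow> bool" where
  "is_argmin S f x \<longleftrightarrow> x \<in> S \<and> (\<forall>y\<in>S. f x \<le> f y)"

text \<open>S k, T k: iterates after k full iterations (S k m = spatial Laplacian of window m).\<close>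
definition spateogl_run ::
  "nat \<Rightarrow> nat \<Rightarrow> (nat \<Rightarrow> nat) \<Rightarrow> (nat \<Rightarrow> mat) \<Rightarrow> real \<Rightarrow> (nat \<Rightarrow> nat \<Rightarrow> mat) \<Rightarrow> (nat \<Rightarrow> mat) \<Rightarrow> bool" where
  "spateogl_run N M K X \<beta> S T \<longleftrightarrow>
     feasible N M (S 0) (T 0) \<and>
     (\<forall>k. (\<forall>m<M. is_argmin (lap_set N)
              (spatial_subobj N M K X \<beta> (\<lambda>j. if j < m then S (Suc k) j else S k j) (T k) m)
              (S (Suc k) m))
         \<and> is_argmin (lap_set M) (temporal_subobj N M \<beta> (S (Suc k))) (T (Suc k)))"

text \<open>Limit point of the iterates (entrywise convergence along a subsequence);
  the limit is taken with zero entries outside the index ranges.\<close>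
definition is_limit_point ::
  "nat \<Rightarrow> nat \<Rightarrow> (nat \<Rightarrow> nat \<Rightarrow> mat) \<Rightarrow> (nat \<Rightarrow> mat) \<Rightarrow> (nat \<Rightarrow> mat) \<Rightarrow> mat \<Rightarrow> bool" where
  "is_limit_point N M S T Ls Lt \<longleftrightarrow>
     (\<forall>m<M. supported N (Ls m)) \<and> supported M Lt \<and>
     (\<exists>r. strict_mono r \<and>
        (\<forall>m<M. \<forall>i<N. \<forall>j<N. (\<lambda>k. S (r k) m i j) \<longlonglongrightarrow> Ls m i j) \<and>
        (\<forall>i<M. \<forall>j<M. (\<lambda>k. T (r k) i j) \<longlonglongrightarrow> Lt i j))"

text \<open>Stationary point of the constrained problem: feasible, and the directional derivative
  of the (smooth) objective towards every feasible point is nonnegative,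
  i.e. the first-order condition <grad F(z*), z - z*> >= 0 for all feasible z.\<close>
definition stationary ::
  "nat \<Rightarrow> nat \<Rightarrow> (nat \<Rightarrow> nat) \<Rightarrow> (nat \<Rightarrow> mat) \<Rightarrow> real \<Rightarrow> (nat \<Rightarrow> mat) \<Rightarrow> mat \<Rightarrow> bool" where
  "stationary N M K X \<beta> Ls Lt \<longleftrightarrow>
     feasible N M Ls Lt \<and>
     (\<forall>Ls' Lt'. feasible N M Ls' Lt' \<longrightarrow>
        (\<exists>D. ((\<lambda>t. objective N M K X \<beta>
                   (\<lambda>m i j. Ls m i j + t * (Ls' m i j - Ls m i j))
                   (\<lambda>i j. Lt i j + t * (Lt' i j - Lt i j))) has_real_derivative D) (at 0)
             \<and> 0 \<le> D))"

end

theory Submission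
  imports Defs
begin

(* Each block subproblem is beta-strongly convex over a closed convex set of matrices (the Laplacian
   constraints survive convex combinations and entrywise limits), so it has exactly one minimizer:
   strong convexity makes every minimizing sequence Cauchy, and two minimizers would have a strictly
   better midpoint. As a function of one block, the objective F differs from that block's subproblem
   by a constant, hence an exact block update lowers F by at least beta/2 times the squared distance
   moved. Since F >= 0, these moves tend to 0, so along a convergent subsequence the partially updated
   iterates share the limit and block-wise optimality passes to it. A block-wise minimum is
   stationary because the directional derivative of F splits into block directional derivatives,
   each of which is nonnegative. The formula for tr(Xt^T Lt Xt) comes from expanding
   sum_ij Lt_ij <L_i, L_j> with the zero row and column sums of Lt. *)

section \<open>Frobenius inner product and the temporal smoothness term\<close>

definition frob_inner :: "nat \<Rightarrow> mat \<Rightarrow> mat \<Rightarrow> real" where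
  "frob_inner n A B = (\<Sum>i<n. \<Sum>j<n. A i j * B i j)"

definition gram :: "nat \<Rightarrow> mat \<Rightarrow> mat" where
  "gram K X = (\<lambda>a b. \<Sum>k<K. X a k * X b k)"

lemma sum_rotate3:
  "(\<Sum>x\<in>A. \<Sum>y\<in>B. \<Sum>z\<in>C. f x y z) = (\<Sum>y\<in>B. \<Sum>z\<in>C. \<Sum>x\<in>A. (f x y z :: 'a::comm_monoid_add))"
  by (subst sum.swap) (simp add: sum.swap[of _ A])

lemma sum_mod_div_lessThan_square:
  fixes n :: nat
  shows "(\<Sum>p<n * n. f (p mod n) (p div n)) = (\<Sum>a<n. \<Sum>b<n. (f a b :: 'a::comm_monoid_add))"
proof -
  have "(\<Sum>p<n * n. f (p mod n) (p div n)) = (\<Sum>b<n. \<Sum>p\<in>{b * n..<b * n + n}. f (p mod n) (p div n))"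
    by (rule sum.nat_group[symmetric])
  also have "\<dots> = (\<Sum>b<n. \<Sum>a<n. f a b)"
  proof (rule sum.cong[OF refl])
    fix b
    have "(\<Sum>p\<in>{b * n..<b * n + n}. f (p mod n) (p div n)) =
        (\<Sum>a<n. f ((a + b * n) mod n) ((a + b * n) div n))"
      by (simp add: sum.shift_bounds_nat_ivl[of _ 0 "b * n" n, simplified] lessThan_atLeast0 add.commute)
    also have "\<dots> = (\<Sum>a<n. f a b)"
      by (rule sum.cong) auto
    finally show "(\<Sum>p\<in>{b * n..<b * n + n}. f (p mod n) (p div n)) = (\<Sum>a<n. f a b)" .
  qed
  finally show ?thesis by (subst sum.swap)
qed

lemma frob_sq_eq_frob_inner: "frob_sq n A = frob_inner n A A"
  unfolding frob_sq_def frob_inner_def by (simp add: power2_eq_square)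

lemma frob_sq_nonneg: "0 \<le> frob_sq n A"
  unfolding frob_sq_def by (intro sum_nonneg) auto

lemma frob_sq_diff_commute: "frob_sq n (\<lambda>a b. A a b - B a b) = frob_sq n (\<lambda>a b. B a b - A a b)"
  unfolding frob_sq_def by (simp add: power2_commute)

lemma frob_sq_diff:
  "frob_sq n (\<lambda>a b. A a b - B a b) = frob_inner n A A - 2 * frob_inner n A B + frob_inner n B B"
proof -
  have "frob_sq n (\<lambda>a b. A a b - B a b) =
      (\<Sum>i<n. \<Sum>j<n. A i j * A i j - 2 * (A i j * B i j) + B i j * B i j)"
    unfolding frob_sq_def by (intro sum.cong refl) (simp add: power2_eq_square algebra_simps)
  then show ?thesis
    unfolding frob_inner_def by (simp add: sum.distrib sum_subtractf sum_distrib_left)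
qed

lemma entry_sq_le_frob_sq:
  assumes "i < n" "j < n"
  shows "(A i j)\<^sup>2 \<le> frob_sq n A"
proof -
  have "(A i j)\<^sup>2 \<le> (\<Sum>b<n. (A i b)\<^sup>2)"
    using assms by (intro member_le_sum) auto
  also have "\<dots> \<le> (\<Sum>a<n. \<Sum>b<n. (A a b)\<^sup>2)"
    using assms by (intro member_le_sum[of i _ "\<lambda>a. \<Sum>b<n. (A a b)\<^sup>2"] sum_nonneg) auto
  finally show ?thesis unfolding frob_sq_def .
qed

lemma spatial_smooth_eq_frob_inner: "spatial_smooth N K X L = frob_inner N L (gram K X)"
proof -
  have "spatial_smooth N K X L = (\<Sum>k<K. \<Sum>a<N. \<Sum>b<N. L a b * (X a k * X b k))"
    unfolding spatial_smooth_def mtrace_def mmult_def transp_def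
    by (simp add: sum_distrib_left mult_ac)
  also have "\<dots> = frob_inner N L (gram K X)"
    unfolding sum_rotate3[where A="{..<K}"] frob_inner_def gram_def by (simp add: sum_distrib_left)
  finally show ?thesis .
qed

lemma temporal_smooth_eq_frob_inner:
  "temporal_smooth N M Ls Lt = (\<Sum>i<M. \<Sum>j<M. Lt i j * frob_inner N (Ls i) (Ls j))"
proof -
  have "temporal_smooth N M Ls Lt =
      (\<Sum>p<N * N. \<Sum>i<M. \<Sum>j<M. Lt i j * (Ls i (p mod N) (p div N) * Ls j (p mod N) (p div N)))"
    unfolding temporal_smooth_def mtrace_def mmult_def transp_def Xtilde_def vec_def
    by (simp add: sum_distrib_left sum_distrib_right mult_ac)
  also have "\<dots> = (\<Sum>a<N. \<Sum>b<N. \<Sum>i<M. \<Sum>j<M. Lt i j * (Ls i a b * Ls j a b))"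
    by (rule sum_mod_div_lessThan_square)
  also have "\<dots> = (\<Sum>i<M. \<Sum>j<M. \<Sum>a<N. \<Sum>b<N. Lt i j * (Ls i a b * Ls j a b))"
    by (simp only: sum_rotate3[where A="{..<N}"])
  also have "\<dots> = (\<Sum>i<M. \<Sum>j<M. Lt i j * frob_inner N (Ls i) (Ls j))"
    unfolding frob_inner_def by (simp add: sum_distrib_left)
  finally show ?thesis .
qed

lemma lap_set_sym: "L \<in> lap_set n \<Longrightarrow> i < n \<Longrightarrow> j < n \<Longrightarrow> L i j = L j i"
  unfolding lap_set_def by (cases "i = j") auto

lemma lap_set_offdiag_nonpos: "L \<in> lap_set n \<Longrightarrow> i < n \<Longrightarrow> j < n \<Longrightarrow> i \<noteq> j \<Longrightarrow> L i j \<le> 0"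
  unfolding lap_set_def by auto

lemma lap_set_row_sum: "L \<in> lap_set n \<Longrightarrow> i < n \<Longrightarrow> (\<Sum>j<n. L i j) = 0"
  unfolding lap_set_def by auto

lemma lap_set_col_sum:
  assumes "L \<in> lap_set n" "j < n"
  shows "(\<Sum>i<n. L i j) = 0"
proof -
  have "(\<Sum>i<n. L i j) = (\<Sum>i<n. L j i)"
    using assms by (intro sum.cong) (auto intro: lap_set_sym)
  then show ?thesis using lap_set_row_sum[OF assms] by simp
qed

lemma lap_set_supported: "L \<in> lap_set n \<Longrightarrow> supported n L"
  unfolding lap_set_def by auto

lemma lap_set_psd: "L \<in> lap_set n \<Longrightarrow> psd n L"
  unfolding lap_set_def by auto

lemma laplacian_form_eq_sum_sq_dist:
  assumes L: "L \<in> lap_set M"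
  shows "(\<Sum>i<M. \<Sum>j<M. L i j * frob_inner N (A i) (A j)) =
    -(1/2) * (\<Sum>i<M. \<Sum>j<M. L i j * frob_sq N (\<lambda>a b. A i a b - A j a b))"
proof -
  have rows: "(\<Sum>i<M. \<Sum>j<M. L i j * frob_inner N (A i) (A i)) = 0"
    by (simp add: sum_distrib_right[symmetric] lap_set_row_sum[OF L])
  have cols: "(\<Sum>i<M. \<Sum>j<M. L i j * frob_inner N (A j) (A j)) = 0"
    by (subst sum.swap) (simp add: sum_distrib_right[symmetric] lap_set_col_sum[OF L])
  show ?thesis
    using rows cols
    by (simp add: frob_sq_diff algebra_simps sum.distrib sum_subtractf sum_distrib_left sum_negf)
qed

lemma sum_symmetric_eq_twice_upper:
  fixes a :: "nat \<Rightarrow> nat \<Rightarrow> 'a::comm_semiring_1"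
  assumes "\<And>i j. i < n \<Longrightarrow> j < n \<Longrightarrow> a i j = a j i" and "\<And>i. i < n \<Longrightarrow> a i i = 0"
  shows "(\<Sum>i<n. \<Sum>j<n. a i j) = 2 * (\<Sum>i<n. \<Sum>j\<in>{i<..<n}. a i j)"
  using assms
proof (induction n)
  case 0
  then show ?case by simp
next
  case (Suc n)
  have IH: "(\<Sum>i<n. \<Sum>j<n. a i j) = 2 * (\<Sum>i<n. \<Sum>j\<in>{i<..<n}. a i j)"
    using Suc by simp
  have new_col: "(\<Sum>i<Suc n. \<Sum>j\<in>{i<..<Suc n}. a i j) = (\<Sum>i<n. \<Sum>j\<in>{i<..<n}. a i j) + (\<Sum>i<n. a i n)"
  proof -
    have "{i<..<Suc n} = insert n {i<..<n}" if "i < n" for i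
      using that by auto
    moreover have "{n<..<Suc n} = {}"
      by auto
    ultimately show ?thesis by (simp add: sum.distrib add.commute)
  qed
  have "(\<Sum>j<n. a n j) = (\<Sum>i<n. a i n)"
    using Suc.prems(1) by (intro sum.cong) auto
  then show ?case
    using IH new_col Suc.prems(2)[of n] by (simp add: sum.distrib distrib_left mult_2 add.assoc)
qed

lemma temporal_smooth_eq_weighted_sum:
  assumes Lt: "Lt \<in> lap_set M"
  shows "temporal_smooth N M Ls Lt =
    (\<Sum>i<M. \<Sum>j\<in>{i<..<M}. tweight Lt i j * frob_sq N (\<lambda>a b. Ls i a b - Ls j a b))"
proof -
  have "(\<Sum>i<M. \<Sum>j<M. Lt i j * frob_sq N (\<lambda>a b. Ls i a b - Ls j a b)) =
      2 * (\<Sum>i<M. \<Sum>j\<in>{i<..<M}. Lt i j * frob_sq N (\<lambda>a b. Ls i a b - Ls j a b))"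
  proof (rule sum_symmetric_eq_twice_upper)
    fix i j assume "i < M" "j < M"
    then show "Lt i j * frob_sq N (\<lambda>a b. Ls i a b - Ls j a b) =
        Lt j i * frob_sq N (\<lambda>a b. Ls j a b - Ls i a b)"
      by (simp add: lap_set_sym[OF Lt] frob_sq_diff_commute[of N "Ls i"])
  qed (simp add: frob_sq_def)
  then show ?thesis
    unfolding temporal_smooth_eq_frob_inner laplacian_form_eq_sum_sq_dist[OF Lt] tweight_def
    by (simp add: sum_negf)
qed

section \<open>Strongly convex problems over closed convex sets of matrices\<close>

definition mat_segment :: "mat \<Rightarrow> mat \<Rightarrow> real \<Rightarrow> mat" where
  "mat_segment A B t = (\<lambda>i j. A i j + t * (B i j - A i j))"

definition mat_convex :: "mat set \<Rightarrow> bool" where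
  "mat_convex S \<longleftrightarrow> (\<forall>A\<in>S. \<forall>B\<in>S. \<forall>t. 0 \<le> t \<longrightarrow> t \<le> 1 \<longrightarrow> mat_segment A B t \<in> S)"

definition mat_strongly_convex :: "nat \<Rightarrow> mat set \<Rightarrow> real \<Rightarrow> (mat \<Rightarrow> real) \<Rightarrow> bool" where
  "mat_strongly_convex n S c q \<longleftrightarrow> (\<forall>A\<in>S. \<forall>B\<in>S. \<forall>t. 0 \<le> t \<longrightarrow> t \<le> 1 \<longrightarrow>
     q (mat_segment A B t) \<le> (1 - t) * q A + t * q B - c * t * (1 - t) * frob_sq n (\<lambda>i j. B i j - A i j))"

definition mat_tendsto :: "nat \<Rightarrow> (nat \<Rightarrow> mat) \<Rightarrow> mat \<Rightarrow> bool" where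
  "mat_tendsto n A B \<longleftrightarrow> (\<forall>i<n. \<forall>j<n. (\<lambda>k. A k i j) \<longlonglongrightarrow> B i j)"

(* A limit only determines the entries inside the index range, so closedness is only demanded
   for limits that vanish outside it. *)
definition mat_closed :: "nat \<Rightarrow> mat set \<Rightarrow> bool" where
  "mat_closed n S \<longleftrightarrow> (\<forall>A B. (\<forall>k. A k \<in> S) \<longrightarrow> supported n B \<longrightarrow> mat_tendsto n A B \<longrightarrow> B \<in> S)"

definition mat_continuous :: "nat \<Rightarrow> (mat \<Rightarrow> real) \<Rightarrow> bool" where
  "mat_continuous n q \<longleftrightarrow> (\<forall>A B. mat_tendsto n A B \<longrightarrow> (\<lambda>k. q (A k)) \<longlonglongrightarrow> q B)"

lemma psd_mat_segment:
  assumes "psd n A" "psd n B" "0 \<le> t" "t \<le> 1"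
  shows "psd n (mat_segment A B t)"
  unfolding psd_def
proof
  fix x :: "nat \<Rightarrow> real"
  have "(\<Sum>i<n. \<Sum>j<n. x i * mat_segment A B t i j * x j) =
      (1 - t) * (\<Sum>i<n. \<Sum>j<n. x i * A i j * x j) + t * (\<Sum>i<n. \<Sum>j<n. x i * B i j * x j)"
    unfolding mat_segment_def by (simp add: algebra_simps sum.distrib sum_subtractf sum_distrib_left)
  also have "\<dots> \<ge> 0"
    using assms unfolding psd_def by (intro add_nonneg_nonneg mult_nonneg_nonneg) auto
  finally show "0 \<le> (\<Sum>i<n. \<Sum>j<n. x i * mat_segment A B t i j * x j)" .
qed

lemma psd_limit:
  assumes "\<And>k. psd n (A k)" and "mat_tendsto n A B"
  shows "psd n B"
  unfolding psd_def
proof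
  fix x :: "nat \<Rightarrow> real"
  have "(\<lambda>k. \<Sum>i<n. \<Sum>j<n. x i * A k i j * x j) \<longlonglongrightarrow> (\<Sum>i<n. \<Sum>j<n. x i * B i j * x j)"
    using assms(2) unfolding mat_tendsto_def by (intro tendsto_intros) auto
  moreover have "0 \<le> (\<Sum>i<n. \<Sum>j<n. x i * A k i j * x j)" for k
    using assms(1) unfolding psd_def by blast
  ultimately show "0 \<le> (\<Sum>i<n. \<Sum>j<n. x i * B i j * x j)"
    by (simp add: LIMSEQ_le_const)
qed

lemma lap_set_convex: "mat_convex (lap_set n)"
  unfolding mat_convex_def
proof (intro ballI allI impI)
  fix A B and t :: real
  assume A: "A \<in> lap_set n" and B: "B \<in> lap_set n" and t: "0 \<le> t" "t \<le> 1"
  let ?C = "mat_segment A B t"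
  have "supported n ?C"
    using lap_set_supported[OF A] lap_set_supported[OF B]
    unfolding supported_def mat_segment_def by auto
  moreover have "psd n ?C"
    using psd_mat_segment[OF lap_set_psd[OF A] lap_set_psd[OF B] t] .
  moreover have "mtrace n ?C = real n"
  proof -
    have "mtrace n ?C = (1 - t) * mtrace n A + t * mtrace n B"
      unfolding mat_segment_def mtrace_def
      by (simp add: algebra_simps sum.distrib sum_subtractf sum_distrib_left)
    moreover have "mtrace n A = real n" "mtrace n B = real n"
      using A B unfolding lap_set_def by blast+
    ultimately show ?thesis
      by (simp add: algebra_simps)
  qed
  moreover have "?C i j = ?C j i \<and> ?C i j \<le> 0" if "i < n" "j < n" "i \<noteq> j" for i j
  proof
    show "?C i j = ?C j i"
      using lap_set_sym[OF A that(1,2)] lap_set_sym[OF B that(1,2)] by (simp add: mat_segment_def)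
    have "(1 - t) * A i j + t * B i j \<le> 0"
      using lap_set_offdiag_nonpos[OF A that] lap_set_offdiag_nonpos[OF B that] t
      by (intro add_nonpos_nonpos mult_nonneg_nonpos) auto
    then show "?C i j \<le> 0"
      by (simp add: mat_segment_def algebra_simps)
  qed
  moreover have "(\<Sum>j<n. ?C i j) = 0" if "i < n" for i
  proof -
    have "(\<Sum>j<n. ?C i j) = (1 - t) * (\<Sum>j<n. A i j) + t * (\<Sum>j<n. B i j)"
      unfolding mat_segment_def by (simp add: algebra_simps sum.distrib sum_subtractf sum_distrib_left)
    then show ?thesis
      using lap_set_row_sum[OF A that] lap_set_row_sum[OF B that] by simp
  qed
  ultimately show "?C \<in> lap_set n"
    unfolding lap_set_def by blast
qed

lemma lap_set_closed: "mat_closed n (lap_set n)"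
  unfolding mat_closed_def
proof (intro allI impI)
  fix A :: "nat \<Rightarrow> mat" and B
  assume A: "\<forall>k. A k \<in> lap_set n" and supp: "supported n B" and lim: "mat_tendsto n A B"
  have entry: "(\<lambda>k. A k i j) \<longlonglongrightarrow> B i j" if "i < n" "j < n" for i j
    using lim that unfolding mat_tendsto_def by blast
  have "psd n B"
    using psd_limit[OF lap_set_psd[OF A[rule_format]] lim] .
  moreover have "mtrace n B = real n"
  proof -
    have "(\<lambda>k. mtrace n (A k)) \<longlonglongrightarrow> mtrace n B"
      unfolding mtrace_def by (intro tendsto_sum entry) auto
    moreover have "mtrace n (A k) = real n" for k
      using A unfolding lap_set_def by blast
    ultimately have "(\<lambda>k. real n) \<longlonglongrightarrow> mtrace n B"
      by simp
    then show ?thesis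
      by (simp add: LIMSEQ_const_iff)
  qed
  moreover have "B i j = B j i \<and> B i j \<le> 0" if "i < n" "j < n" "i \<noteq> j" for i j
  proof
    have "A k i j = A k j i" for k
      using lap_set_sym[OF A[rule_format] that(1,2)] .
    then have "(\<lambda>k. A k i j) \<longlonglongrightarrow> B j i"
      using entry[OF that(2,1)] by simp
    then show "B i j = B j i"
      using LIMSEQ_unique[OF entry[OF that(1,2)]] by blast
    have "A k i j \<le> 0" for k
      using lap_set_offdiag_nonpos[OF A[rule_format] that] .
    then show "B i j \<le> 0"
      by (simp add: LIMSEQ_le_const2[OF entry[OF that(1,2)]])
  qed
  moreover have "(\<Sum>j<n. B i j) = 0" if "i < n" for i
  proof -
    have "(\<lambda>k. \<Sum>j<n. A k i j) \<longlonglongrightarrow> (\<Sum>j<n. B i j)"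
      using that by (intro tendsto_sum entry) auto
    moreover have "(\<Sum>j<n. A k i j) = 0" for k
      using lap_set_row_sum[OF A[rule_format] that] .
    ultimately have "(\<lambda>k. 0) \<longlonglongrightarrow> (\<Sum>j<n. B i j)"
      by simp
    then show ?thesis
      by (simp add: LIMSEQ_const_iff)
  qed
  ultimately show "B \<in> lap_set n"
    using supp unfolding lap_set_def by blast
qed

lemma frob_sq_segment_diff:
  "frob_sq n (\<lambda>a b. mat_segment A B t a b - C a b) =
     (1 - t) * frob_sq n (\<lambda>a b. A a b - C a b) + t * frob_sq n (\<lambda>a b. B a b - C a b)
     - t * (1 - t) * frob_sq n (\<lambda>a b. B a b - A a b)"
proof -
  have "(x + t * (z - x) - y)\<^sup>2 = (1 - t) * (x - y)\<^sup>2 + t * (z - y)\<^sup>2 - t * (1 - t) * (z - x)\<^sup>2"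
    for x y z :: real
    by (simp add: power2_eq_square algebra_simps)
  then show ?thesis
    unfolding frob_sq_def mat_segment_def by (simp add: sum.distrib sum_subtractf sum_distrib_left)
qed

lemma frob_sq_segment:
  "frob_sq n (mat_segment A B t) =
     (1 - t) * frob_sq n A + t * frob_sq n B - t * (1 - t) * frob_sq n (\<lambda>a b. B a b - A a b)"
  using frob_sq_segment_diff[of n A B t "\<lambda>a b. 0"] by (simp add: mat_segment_def)

lemma strongly_convex_midpoint:
  assumes q: "mat_strongly_convex n S c q" and S: "mat_convex S"
    and A: "A \<in> S" and B: "B \<in> S" and lower: "\<forall>C\<in>S. v \<le> q C"
  shows "c / 4 * frob_sq n (\<lambda>i j. B i j - A i j) \<le> (q A + q B) / 2 - v"
proof -
  have "v \<le> q (mat_segment A B (1/2))"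
    using lower S A B unfolding mat_convex_def by auto
  also have "\<dots> \<le> (q A + q B) / 2 - c / 4 * frob_sq n (\<lambda>i j. B i j - A i j)"
    using q[unfolded mat_strongly_convex_def, rule_format, OF A B, of "1/2"]
    by (simp add: add_divide_distrib)
  finally show ?thesis by linarith
qed

lemma strongly_convex_argmin_growth:
  assumes q: "mat_strongly_convex n S c q" and S: "mat_convex S"
    and A: "is_argmin S q A" and B: "B \<in> S"
  shows "q A + c / 2 * frob_sq n (\<lambda>i j. B i j - A i j) \<le> q B"
  using strongly_convex_midpoint[OF q S _ B, of A "q A"] A unfolding is_argmin_def by simp

lemma strongly_convex_argmin_unique:
  assumes "0 < c" and q: "mat_strongly_convex n S c q" and S: "mat_convex S"
    and supp: "\<forall>A\<in>S. supported n A" and A: "is_argmin S q A" and B: "is_argmin S q B"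
  shows "A = B"
proof -
  have AS: "A \<in> S" and BS: "B \<in> S"
    using A B unfolding is_argmin_def by auto
  have "q A + c / 2 * frob_sq n (\<lambda>i j. B i j - A i j) \<le> q B"
    by (rule strongly_convex_argmin_growth[OF q S A BS])
  moreover have "q B \<le> q A"
    using B AS unfolding is_argmin_def by auto
  ultimately have "c / 2 * frob_sq n (\<lambda>i j. B i j - A i j) \<le> c / 2 * 0"
    by simp
  then have "frob_sq n (\<lambda>i j. B i j - A i j) \<le> 0"
    using \<open>0 < c\<close> by (simp only: mult_le_cancel_left_pos half_gt_zero)
  then have "(B i j - A i j)\<^sup>2 \<le> 0" if "i < n" "j < n" for i j
    using entry_sq_le_frob_sq[OF that, of "\<lambda>i j. B i j - A i j"] by linarith
  then have "A i j = B i j" if "i < n" "j < n" for i j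
    using that by fastforce
  moreover have "A i j = B i j" if "\<not> (i < n \<and> j < n)" for i j
    using supp AS BS that unfolding supported_def by (metis not_less)
  ultimately show "A = B"
    by blast
qed

lemma Cauchy_if_sq_dist_le:
  fixes x e :: "nat \<Rightarrow> real"
  assumes e: "e \<longlonglongrightarrow> 0" and le: "\<And>a b. (x a - x b)\<^sup>2 \<le> e a + e b"
  shows "Cauchy x"
proof (rule metric_CauchyI)
  fix \<epsilon> :: real
  assume "0 < \<epsilon>"
  then have "0 < \<epsilon>\<^sup>2 / 2" by simp
  then obtain K where K: "\<And>k. K \<le> k \<Longrightarrow> \<bar>e k\<bar> < \<epsilon>\<^sup>2 / 2"
    using LIMSEQ_D[OF e] by (metis real_norm_def diff_zero)
  have "dist (x a) (x b) < \<epsilon>" if "K \<le> a" "K \<le> b" for a b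
  proof -
    have "(x a - x b)\<^sup>2 < \<epsilon>\<^sup>2"
      using le[of a b] K[OF that(1)] K[OF that(2)] by linarith
    then have "\<bar>x a - x b\<bar> < \<epsilon>"
      using \<open>0 < \<epsilon>\<close> power2_less_imp_less[of "\<bar>x a - x b\<bar>" \<epsilon>] by simp
    then show ?thesis
      by (simp add: dist_real_def)
  qed
  then show "\<exists>K. \<forall>a\<ge>K. \<forall>b\<ge>K. dist (x a) (x b) < \<epsilon>"
    by blast
qed

lemma strongly_convex_minimizing_Cauchy:
  assumes c: "0 < c" and q: "mat_strongly_convex n S c q" and S: "mat_convex S"
    and A: "\<And>k. A k \<in> S" and lower: "\<forall>C\<in>S. v \<le> q C" and q_lim: "(\<lambda>k. q (A k)) \<longlonglongrightarrow> v"
    and "i < n" "j < n"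
  shows "Cauchy (\<lambda>k. A k i j)"
proof -
  define e where "e k = 2 / c * (q (A k) - v)" for k
  have e_lim: "e \<longlonglongrightarrow> 0"
    unfolding e_def using tendsto_mult[OF tendsto_const tendsto_diff[OF q_lim tendsto_const], of "2 / c" v]
    by simp
  show ?thesis
  proof (rule Cauchy_if_sq_dist_le[OF e_lim])
    fix a b
    have "(A a i j - A b i j)\<^sup>2 \<le> frob_sq n (\<lambda>i j. A b i j - A a i j)"
      using entry_sq_le_frob_sq[OF \<open>i < n\<close> \<open>j < n\<close>, of "\<lambda>i j. A b i j - A a i j"]
      by (simp add: power2_commute)
    also have "\<dots> \<le> ((q (A a) + q (A b)) / 2 - v) / (c / 4)"
      using strongly_convex_midpoint[OF q S A[of a] A[of b] lower] c
      by (simp add: pos_le_divide_eq mult.commute)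
    also have "\<dots> = e a + e b"
      using c by (simp add: e_def field_simps)
    finally show "(A a i j - A b i j)\<^sup>2 \<le> e a + e b" .
  qed
qed

lemma strongly_convex_argmin_exists:
  assumes c: "0 < c" and q: "mat_strongly_convex n S c q"
    and S: "mat_convex S" "mat_closed n S" "S \<noteq> {}"
    and bdd: "bdd_below (q ` S)" and cont: "mat_continuous n q"
  shows "\<exists>A. is_argmin S q A"
proof -
  define v where "v = Inf (q ` S)"
  have lower: "\<forall>C\<in>S. v \<le> q C"
    unfolding v_def using bdd by (auto intro: cInf_lower)
  have "\<exists>C\<in>S. q C < v + inverse (real (Suc k))" for k
    using cInf_lessD[of "q ` S" "v + inverse (real (Suc k))"] S(3) unfolding v_def by auto
  then obtain A where A: "\<And>k. A k \<in> S" and qA: "\<And>k. q (A k) < v + inverse (real (Suc k))"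
    by metis
  have q_lim: "(\<lambda>k. q (A k)) \<longlonglongrightarrow> v"
  proof (rule tendsto_sandwich[of "\<lambda>k. v" _ _ "\<lambda>k. v + inverse (real (Suc k))"])
    show "(\<lambda>k. v + inverse (real (Suc k))) \<longlonglongrightarrow> v"
      using tendsto_add[OF tendsto_const LIMSEQ_inverse_real_of_nat, of v] by simp
  qed (use lower A qA in \<open>auto intro!: always_eventually less_imp_le\<close>)
  have Cauchy: "Cauchy (\<lambda>k. A k i j)" if "i < n" "j < n" for i j
    by (rule strongly_convex_minimizing_Cauchy[OF c q S(1) A lower q_lim that])
  define B where "B i j = (if i < n \<and> j < n then lim (\<lambda>k. A k i j) else 0)" for i j
  have lim: "mat_tendsto n A B"
    using Cauchy unfolding mat_tendsto_def B_def
    by (auto simp: Cauchy_convergent_iff convergent_LIMSEQ_iff)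
  have "supported n B"
    unfolding supported_def B_def by auto
  then have "B \<in> S"
    using S(2) A lim unfolding mat_closed_def by blast
  moreover have "q B = v"
    using cont lim LIMSEQ_unique[OF _ q_lim] unfolding mat_continuous_def by blast
  ultimately show ?thesis
    using lower unfolding is_argmin_def by auto
qed

lemma strongly_convex_ex1_argmin:
  assumes "0 < c" and q: "mat_strongly_convex n S c q"
    and S: "mat_convex S" "mat_closed n S" "S \<noteq> {}" "\<forall>A\<in>S. supported n A"
    and "bdd_below (q ` S)" and "mat_continuous n q"
  shows "\<exists>!A. is_argmin S q A"
  using strongly_convex_argmin_exists[OF assms(1,2) S(1-3) assms(7,8)]
    strongly_convex_argmin_unique[OF assms(1,2) S(1,4)]
  by blast

section \<open>The block subproblems\<close>

lemma spatial_smooth_nonneg: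
  assumes "psd N L"
  shows "0 \<le> spatial_smooth N K X L"
proof -
  have "spatial_smooth N K X L = (\<Sum>k<K. \<Sum>a<N. \<Sum>b<N. X a k * L a b * X b k)"
    unfolding spatial_smooth_def mtrace_def mmult_def transp_def
    by (simp add: sum_distrib_left mult_ac)
  also have "\<dots> \<ge> 0"
  proof (rule sum_nonneg)
    fix k
    show "0 \<le> (\<Sum>a<N. \<Sum>b<N. X a k * L a b * X b k)"
      using assms[unfolded psd_def, rule_format, of "\<lambda>a. X a k"] by simp
  qed
  finally show ?thesis .
qed

lemma temporal_smooth_nonneg:
  assumes Lt: "Lt \<in> lap_set M"
  shows "0 \<le> temporal_smooth N M Ls Lt"
  unfolding temporal_smooth_eq_weighted_sum[OF Lt] tweight_def
  by (intro sum_nonneg mult_nonneg_nonneg frob_sq_nonneg) (auto intro!: lap_set_offdiag_nonpos[OF Lt])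

lemma objective_nonneg:
  assumes "feasible N M Ls Lt" and "0 \<le> \<beta>"
  shows "0 \<le> objective N M K X \<beta> Ls Lt"
  using assms unfolding feasible_def objective_def
  by (intro add_nonneg_nonneg sum_nonneg mult_nonneg_nonneg frob_sq_nonneg temporal_smooth_nonneg
      spatial_smooth_nonneg lap_set_psd) auto

lemma spatial_subobj_nonneg:
  assumes Lt: "Lt \<in> lap_set M" and "m < M" and "L \<in> lap_set N" and "0 \<le> \<beta>"
  shows "0 \<le> spatial_subobj N M K X \<beta> Ls Lt m L"
  using assms unfolding spatial_subobj_def tweight_def
  by (intro add_nonneg_nonneg sum_nonneg mult_nonneg_nonneg frob_sq_nonneg spatial_smooth_nonneg
      lap_set_psd)
    (auto intro!: lap_set_offdiag_nonpos[OF Lt])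

lemma temporal_subobj_nonneg:
  assumes "L \<in> lap_set M" and "0 \<le> \<beta>"
  shows "0 \<le> temporal_subobj N M \<beta> Ls L"
  using assms unfolding temporal_subobj_def
  by (intro add_nonneg_nonneg mult_nonneg_nonneg frob_sq_nonneg temporal_smooth_nonneg)

lemma spatial_smooth_segment:
  "spatial_smooth N K X (mat_segment A B t) =
    (1 - t) * spatial_smooth N K X A + t * spatial_smooth N K X B"
  unfolding spatial_smooth_eq_frob_inner frob_inner_def mat_segment_def
  by (simp add: algebra_simps sum.distrib sum_subtractf sum_distrib_left)

lemma temporal_smooth_segment:
  "temporal_smooth N M Ls (mat_segment A B t) =
    (1 - t) * temporal_smooth N M Ls A + t * temporal_smooth N M Ls B"
  unfolding temporal_smooth_eq_frob_inner mat_segment_def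
  by (simp add: algebra_simps sum.distrib sum_subtractf sum_distrib_left)

lemma spatial_subobj_strongly_convex:
  assumes Lt: "Lt \<in> lap_set M" and m: "m < M"
  shows "mat_strongly_convex N S \<beta> (spatial_subobj N M K X \<beta> Ls Lt m)"
  unfolding mat_strongly_convex_def
proof (intro ballI allI impI)
  fix A B and t :: real
  assume t: "0 \<le> t" "t \<le> 1"
  let ?J = "{..<M} - {m}"
  define d where "d = frob_sq N (\<lambda>i j. B i j - A i j)"
  have coupling: "(\<Sum>j\<in>?J. tweight Lt m j * frob_sq N (\<lambda>a b. mat_segment A B t a b - Ls j a b)) =
      (1 - t) * (\<Sum>j\<in>?J. tweight Lt m j * frob_sq N (\<lambda>a b. A a b - Ls j a b))
      + t * (\<Sum>j\<in>?J. tweight Lt m j * frob_sq N (\<lambda>a b. B a b - Ls j a b))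
      - t * (1 - t) * d * (\<Sum>j\<in>?J. tweight Lt m j)"
    unfolding frob_sq_segment_diff d_def
    by (simp add: algebra_simps sum.distrib sum_subtractf sum_distrib_left sum_distrib_right)
  have "0 \<le> t * (1 - t) * d * (\<Sum>j\<in>?J. tweight Lt m j)"
    using t lap_set_offdiag_nonpos[OF Lt m] unfolding d_def tweight_def
    by (intro mult_nonneg_nonneg sum_nonneg frob_sq_nonneg) auto
  then show "spatial_subobj N M K X \<beta> Ls Lt m (mat_segment A B t)
      \<le> (1 - t) * spatial_subobj N M K X \<beta> Ls Lt m A + t * spatial_subobj N M K X \<beta> Ls Lt m B
        - \<beta> * t * (1 - t) * frob_sq N (\<lambda>i j. B i j - A i j)"
    unfolding spatial_subobj_def spatial_smooth_segment frob_sq_segment coupling d_def[symmetric]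
    by (simp add: algebra_simps)
qed

lemma temporal_subobj_strongly_convex: "mat_strongly_convex M S \<beta> (temporal_subobj N M \<beta> Ls)"
  unfolding mat_strongly_convex_def temporal_subobj_def temporal_smooth_segment frob_sq_segment
  by (simp add: algebra_simps)

lemma spatial_subobj_continuous: "mat_continuous N (spatial_subobj N M K X \<beta> Ls Lt m)"
  unfolding mat_continuous_def mat_tendsto_def spatial_subobj_def spatial_smooth_eq_frob_inner
    frob_inner_def frob_sq_def
  by (intro allI impI tendsto_intros) auto

lemma temporal_subobj_continuous: "mat_continuous M (temporal_subobj N M \<beta> Ls)"
  unfolding mat_continuous_def mat_tendsto_def temporal_subobj_def temporal_smooth_eq_frob_inner
    frob_inner_def frob_sq_def
  by (intro allI impI tendsto_intros) auto

lemma spatial_subproblem_ex1_argmin: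
  assumes "0 < \<beta>" and "lap_set N \<noteq> {}" and "Lt \<in> lap_set M" and "m < M"
  shows "\<exists>!L. is_argmin (lap_set N) (spatial_subobj N M K X \<beta> Ls Lt m) L"
proof (rule strongly_convex_ex1_argmin)
  show "bdd_below (spatial_subobj N M K X \<beta> Ls Lt m ` lap_set N)"
    using spatial_subobj_nonneg assms less_imp_le[OF \<open>0 < \<beta>\<close>] by (intro bdd_belowI[of _ 0]) auto
qed (use assms in \<open>auto intro: spatial_subobj_strongly_convex spatial_subobj_continuous
      lap_set_convex lap_set_closed lap_set_supported\<close>)

lemma temporal_subproblem_ex1_argmin:
  assumes "0 < \<beta>" and "lap_set M \<noteq> {}"
  shows "\<exists>!L. is_argmin (lap_set M) (temporal_subobj N M \<beta> Ls) L"
proof (rule strongly_convex_ex1_argmin)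
  show "bdd_below (temporal_subobj N M \<beta> Ls ` lap_set M)"
    using temporal_subobj_nonneg less_imp_le[OF \<open>0 < \<beta>\<close>] by (intro bdd_belowI[of _ 0]) auto
qed (use assms in \<open>auto intro: temporal_subobj_strongly_convex temporal_subobj_continuous
      lap_set_convex lap_set_closed lap_set_supported\<close>)

lemma sum_fun_upd:
  assumes "finite I" "m \<in> I"
  shows "(\<Sum>i\<in>I. f i ((x(m := A)) i)) = f m A + (\<Sum>i\<in>I - {m}. f i (x i))"
  by (simp add: sum.remove[OF assms])

lemma sum_sum_fun_upd_symmetric:
  fixes g :: "nat \<Rightarrow> nat \<Rightarrow> 'b \<Rightarrow> 'b \<Rightarrow> 'a::comm_semiring_1"
  assumes I: "finite I" "m \<in> I"
    and sym: "\<And>i j P Q. i \<in> I \<Longrightarrow> j \<in> I \<Longrightarrow> g i j P Q = g j i Q P" and diag: "\<And>P. g m m P P = 0"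
  shows "(\<Sum>i\<in>I. \<Sum>j\<in>I. g i j ((x(m := A)) i) ((x(m := A)) j)) =
    2 * (\<Sum>j\<in>I - {m}. g m j A (x j)) + (\<Sum>i\<in>I - {m}. \<Sum>j\<in>I - {m}. g i j (x i) (x j))"
proof -
  let ?x = "x(m := A)"
  have outer: "(\<Sum>i\<in>I. \<Sum>j\<in>I. g i j (?x i) (?x j)) =
      (\<Sum>j\<in>I. g m j A (?x j)) + (\<Sum>i\<in>I - {m}. \<Sum>j\<in>I. g i j (x i) (?x j))"
    using sum_fun_upd[OF I, of "\<lambda>i P. \<Sum>j\<in>I. g i j P (?x j)" x A] by simp
  have row_m: "(\<Sum>j\<in>I. g m j A (?x j)) = (\<Sum>j\<in>I - {m}. g m j A (x j))"
    using sum_fun_upd[OF I, of "\<lambda>j. g m j A" x A] diag by simp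
  have rows: "(\<Sum>j\<in>I. g i j (x i) (?x j)) = g i m (x i) A + (\<Sum>j\<in>I - {m}. g i j (x i) (x j))" for i
    using sum_fun_upd[OF I, of "\<lambda>j. g i j (x i)" x A] by simp
  have col_m: "(\<Sum>i\<in>I - {m}. g i m (x i) A) = (\<Sum>j\<in>I - {m}. g m j A (x j))"
    using I(2) by (intro sum.cong) (auto simp: sym)
  show ?thesis
    unfolding outer row_m rows sum.distrib col_m by (simp add: mult_2 add.assoc)
qed

lemma objective_fun_upd_spatial:
  assumes Lt: "Lt \<in> lap_set M" and m: "m < M"
  obtains R where "\<And>A. objective N M K X \<beta> (Ls(m := A)) Lt = spatial_subobj N M K X \<beta> Ls Lt m A + R"
proof -
  let ?I = "{..<M} - {m}"
  let ?d = "\<lambda>P Q. frob_sq N (\<lambda>a b. P a b - Q a b)"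
  define R where "R = (\<Sum>i\<in>?I. spatial_smooth N (K i) (X i) (Ls i)) + \<beta> * (\<Sum>i\<in>?I. frob_sq N (Ls i))
     - (1/2) * (\<Sum>i\<in>?I. \<Sum>j\<in>?I. Lt i j * ?d (Ls i) (Ls j)) + \<beta> * frob_sq M Lt"
  have I: "finite {..<M}" "m \<in> {..<M}"
    using m by auto
  have "(\<Sum>i<M. \<Sum>j<M. Lt i j * ?d ((Ls(m := A)) i) ((Ls(m := A)) j)) =
      2 * (\<Sum>j\<in>?I. Lt m j * ?d A (Ls j)) + (\<Sum>i\<in>?I. \<Sum>j\<in>?I. Lt i j * ?d (Ls i) (Ls j))" for A
  proof (rule sum_sum_fun_upd_symmetric[OF I, where g = "\<lambda>i j P Q. Lt i j * ?d P Q"])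
    show "Lt i j * ?d P Q = Lt j i * ?d Q P" if "i \<in> {..<M}" "j \<in> {..<M}" for i j P Q
      using that by (simp add: lap_set_sym[OF Lt] frob_sq_diff_commute[of N P])
  qed (simp add: frob_sq_def)
  moreover have "(\<Sum>i<M. spatial_smooth N (K i) (X i) ((Ls(m := A)) i)) =
      spatial_smooth N (K m) (X m) A + (\<Sum>i\<in>?I. spatial_smooth N (K i) (X i) (Ls i))" for A
    using sum_fun_upd[OF I, of "\<lambda>i. spatial_smooth N (K i) (X i)" Ls A] by simp
  moreover have "(\<Sum>i<M. frob_sq N ((Ls(m := A)) i)) = frob_sq N A + (\<Sum>i\<in>?I. frob_sq N (Ls i))" for A
    using sum_fun_upd[OF I, of "\<lambda>i. frob_sq N" Ls A] by simp
  ultimately have "objective N M K X \<beta> (Ls(m := A)) Lt = spatial_subobj N M K X \<beta> Ls Lt m A + R" for A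
    unfolding objective_def temporal_smooth_eq_frob_inner laplacian_form_eq_sum_sq_dist[OF Lt]
      spatial_subobj_def tweight_def R_def
    by (simp add: sum_negf algebra_simps)
  then show thesis
    by (rule that)
qed

lemma objective_eq_temporal_subobj:
  "objective N M K X \<beta> Ls Lt =
    (\<Sum>m<M. spatial_smooth N (K m) (X m) (Ls m)) + \<beta> * (\<Sum>m<M. frob_sq N (Ls m))
    + temporal_subobj N M \<beta> Ls Lt"
  unfolding objective_def temporal_subobj_def by simp

lemma objective_cong:
  assumes "\<And>m. m < M \<Longrightarrow> Ls m = Ls' m"
  shows "objective N M K X \<beta> Ls Lt = objective N M K X \<beta> Ls' Lt"
  unfolding objective_def temporal_smooth_eq_frob_inner using assms by simp

section \<open>Descent of the block coordinate iteration\<close>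

definition sweep :: "(nat \<Rightarrow> nat \<Rightarrow> mat) \<Rightarrow> nat \<Rightarrow> nat \<Rightarrow> nat \<Rightarrow> mat" where
  "sweep S k m = (\<lambda>j. if j < m then S (Suc k) j else S k j)"

lemma sweep_0: "sweep S k 0 = S k"
  by (simp add: sweep_def)

lemma objective_sweep_full: "objective N M K X \<beta> (sweep S k M) Lt = objective N M K X \<beta> (S (Suc k)) Lt"
  by (rule objective_cong) (simp add: sweep_def)

lemma spateogl_run_feasible:
  assumes "spateogl_run N M K X \<beta> S T"
  shows "feasible N M (S k) (T k)"
  using assms by (cases k) (auto simp: spateogl_run_def feasible_def is_argmin_def)

lemma spateogl_run_spatial_argmin:
  assumes "spateogl_run N M K X \<beta> S T" and "m < M"
  shows "is_argmin (lap_set N) (spatial_subobj N M K X \<beta> (sweep S k m) (T k) m) (S (Suc k) m)"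
  using assms unfolding spateogl_run_def sweep_def by blast

lemma spateogl_run_temporal_argmin:
  assumes "spateogl_run N M K X \<beta> S T"
  shows "is_argmin (lap_set M) (temporal_subobj N M \<beta> (S (Suc k))) (T (Suc k))"
  using assms unfolding spateogl_run_def by blast

lemma spatial_update_descent:
  assumes run: "spateogl_run N M K X \<beta> S T" and m: "m < M"
  shows "objective N M K X \<beta> (sweep S k (Suc m)) (T k)
      + \<beta> / 2 * frob_sq N (\<lambda>a b. S k m a b - S (Suc k) m a b)
    \<le> objective N M K X \<beta> (sweep S k m) (T k)"
    and "L \<in> lap_set N \<Longrightarrow>
      objective N M K X \<beta> (sweep S k (Suc m)) (T k)
      \<le> objective N M K X \<beta> ((sweep S k (Suc m))(m := L)) (T k)"
proof -
  have feas: "T k \<in> lap_set M" "S k m \<in> lap_set N"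
    using spateogl_run_feasible[OF run, of k] m unfolding feasible_def by auto
  obtain R where R: "\<And>A. objective N M K X \<beta> ((sweep S k m)(m := A)) (T k) =
      spatial_subobj N M K X \<beta> (sweep S k m) (T k) m A + R"
    using objective_fun_upd_spatial[OF feas(1) m] by blast
  have new: "(sweep S k m)(m := S (Suc k) m) = sweep S k (Suc m)"
    and old: "(sweep S k m)(m := S k m) = sweep S k m"
    and any: "(sweep S k (Suc m))(m := L) = (sweep S k m)(m := L)"
    by (auto simp: sweep_def)
  note argmin = spateogl_run_spatial_argmin[OF run m, of k]
  show "objective N M K X \<beta> (sweep S k (Suc m)) (T k)
      + \<beta> / 2 * frob_sq N (\<lambda>a b. S k m a b - S (Suc k) m a b)
    \<le> objective N M K X \<beta> (sweep S k m) (T k)"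
    using strongly_convex_argmin_growth[OF spatial_subobj_strongly_convex[OF feas(1) m] lap_set_convex
        argmin feas(2)] R[of "S (Suc k) m"] R[of "S k m"]
    unfolding new old by simp
  show "objective N M K X \<beta> (sweep S k (Suc m)) (T k)
      \<le> objective N M K X \<beta> ((sweep S k (Suc m))(m := L)) (T k)"
    if "L \<in> lap_set N"
    using argmin that R[of "S (Suc k) m"] R[of L] unfolding new any is_argmin_def by simp
qed

lemma temporal_update_descent:
  assumes run: "spateogl_run N M K X \<beta> S T"
  shows "objective N M K X \<beta> (S (Suc k)) (T (Suc k)) + \<beta> / 2 * frob_sq M (\<lambda>a b. T k a b - T (Suc k) a b)
    \<le> objective N M K X \<beta> (S (Suc k)) (T k)"
    and "L \<in> lap_set M \<Longrightarrow> objective N M K X \<beta> (S (Suc k)) (T (Suc k)) \<le> objective N M K X \<beta> (S (Suc k)) L"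
proof -
  note argmin = spateogl_run_temporal_argmin[OF run, of k]
  have "T k \<in> lap_set M"
    using spateogl_run_feasible[OF run, of k] unfolding feasible_def by auto
  then show "objective N M K X \<beta> (S (Suc k)) (T (Suc k))
      + \<beta> / 2 * frob_sq M (\<lambda>a b. T k a b - T (Suc k) a b)
    \<le> objective N M K X \<beta> (S (Suc k)) (T k)"
    using strongly_convex_argmin_growth[OF temporal_subobj_strongly_convex lap_set_convex argmin]
    unfolding objective_eq_temporal_subobj by simp
  show "objective N M K X \<beta> (S (Suc k)) (T (Suc k)) \<le> objective N M K X \<beta> (S (Suc k)) L" if "L \<in> lap_set M"
    using argmin that unfolding objective_eq_temporal_subobj is_argmin_def by simp
qed

lemma objective_sweep_antimono:
  assumes run: "spateogl_run N M K X \<beta> S T" and "0 \<le> \<beta>" and "a \<le> b" and "b \<le> M"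
  shows "objective N M K X \<beta> (sweep S k b) (T k) \<le> objective N M K X \<beta> (sweep S k a) (T k)"
  using \<open>a \<le> b\<close> \<open>b \<le> M\<close>
proof (induction b rule: dec_induct)
  case base
  then show ?case by simp
next
  case (step m)
  have "0 \<le> \<beta> / 2 * frob_sq N (\<lambda>a b. S k m a b - S (Suc k) m a b)"
    using \<open>0 \<le> \<beta>\<close> by (simp add: frob_sq_nonneg)
  then show ?case
    using spatial_update_descent(1)[OF run, of m k] step by simp
qed

lemma objective_descent:
  assumes run: "spateogl_run N M K X \<beta> S T" and "0 \<le> \<beta>"
  shows "m < M \<Longrightarrow> objective N M K X \<beta> (S (Suc k)) (T (Suc k))
      + \<beta> / 2 * frob_sq N (\<lambda>a b. S k m a b - S (Suc k) m a b) \<le> objective N M K X \<beta> (S k) (T k)"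
    and "objective N M K X \<beta> (S (Suc k)) (T (Suc k))
      + \<beta> / 2 * frob_sq M (\<lambda>a b. T k a b - T (Suc k) a b) \<le> objective N M K X \<beta> (S k) (T k)"
    and "objective N M K X \<beta> (S (Suc k)) (T (Suc k)) \<le> objective N M K X \<beta> (S k) (T k)"
proof -
  let ?F = "\<lambda>Ls Lt. objective N M K X \<beta> Ls Lt"
  have temporal_gap: "0 \<le> \<beta> / 2 * frob_sq M (\<lambda>a b. T k a b - T (Suc k) a b)"
    using \<open>0 \<le> \<beta>\<close> by (simp add: frob_sq_nonneg)
  have sweep_le: "?F (sweep S k b) (T k) \<le> ?F (sweep S k a) (T k)" if "a \<le> b" "b \<le> M" for a b
    using objective_sweep_antimono[OF run \<open>0 \<le> \<beta>\<close> that] .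
  have after_sweep: "?F (S (Suc k)) (T (Suc k)) + \<beta> / 2 * frob_sq M (\<lambda>a b. T k a b - T (Suc k) a b)
      \<le> ?F (S (Suc k)) (T k)"
    by (rule temporal_update_descent(1)[OF run])
  show "?F (S (Suc k)) (T (Suc k)) + \<beta> / 2 * frob_sq M (\<lambda>a b. T k a b - T (Suc k) a b) \<le> ?F (S k) (T k)"
    using after_sweep sweep_le[of 0 M] by (simp add: sweep_0 objective_sweep_full)
  then show "?F (S (Suc k)) (T (Suc k)) \<le> ?F (S k) (T k)"
    using temporal_gap by linarith
  assume "m < M"
  then show "?F (S (Suc k)) (T (Suc k)) + \<beta> / 2 * frob_sq N (\<lambda>a b. S k m a b - S (Suc k) m a b)
      \<le> ?F (S k) (T k)"
    using spatial_update_descent(1)[OF run \<open>m < M\<close>, of k] after_sweep temporal_gap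
      sweep_le[of "Suc m" M] sweep_le[of 0 m] by (simp add: sweep_0 objective_sweep_full)
qed

lemma descent_gaps_tendsto_zero:
  fixes f g :: "nat \<Rightarrow> real"
  assumes descent: "\<And>k. f (Suc k) + g k \<le> f k" and gap: "\<And>k. 0 \<le> g k" and lower: "\<And>k. b \<le> f k"
  shows "g \<longlonglongrightarrow> 0"
proof -
  have "f (Suc k) \<le> f k" for k
    using descent[of k] gap[of k] by linarith
  then have "decseq f"
    by (rule decseq_SucI)
  then obtain L where "f \<longlonglongrightarrow> L"
    using decseq_convergent lower by metis
  then have "(\<lambda>k. f k - f (Suc k)) \<longlonglongrightarrow> 0"
    using tendsto_diff[OF _ LIMSEQ_Suc] by force
  moreover have "g k \<le> f k - f (Suc k)" for k
    using descent[of k] by linarith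
  ultimately show ?thesis
    using gap by (intro tendsto_sandwich[OF _ _ tendsto_const, of _ g]) (auto intro!: always_eventually)
qed

lemma entry_tendsto_zero_if_frob_sq_tendsto_zero:
  assumes "(\<lambda>k. frob_sq n (D k)) \<longlonglongrightarrow> 0" and "i < n" "j < n"
  shows "(\<lambda>k. D k i j) \<longlonglongrightarrow> 0"
proof (rule tendsto_0_le[where K = 1])
  show "(\<lambda>k. sqrt (frob_sq n (D k))) \<longlonglongrightarrow> 0"
    using tendsto_real_sqrt[OF assms(1)] by simp
  show "\<forall>\<^sub>F k in sequentially. norm (D k i j) \<le> norm (sqrt (frob_sq n (D k))) * 1"
    using entry_sq_le_frob_sq[OF assms(2,3)] frob_sq_nonneg
    by (auto intro!: always_eventually real_le_rsqrt)
qed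

lemma spateogl_run_steps_tendsto_zero:
  assumes run: "spateogl_run N M K X \<beta> S T" and "0 < \<beta>"
  shows "m < M \<Longrightarrow> i < N \<Longrightarrow> j < N \<Longrightarrow> (\<lambda>k. S k m i j - S (Suc k) m i j) \<longlonglongrightarrow> 0"
    and "i < M \<Longrightarrow> j < M \<Longrightarrow> (\<lambda>k. T k i j - T (Suc k) i j) \<longlonglongrightarrow> 0"
proof -
  let ?F = "\<lambda>k. objective N M K X \<beta> (S k) (T k)"
  have lower: "0 \<le> ?F k" for k
    using objective_nonneg[OF spateogl_run_feasible[OF run]] \<open>0 < \<beta>\<close> by simp
  have gap_to_zero: "(\<lambda>k. frob_sq n (D k)) \<longlonglongrightarrow> 0"
    if "\<And>k. ?F (Suc k) + \<beta> / 2 * frob_sq n (D k) \<le> ?F k" for n D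
  proof -
    have "(\<lambda>k. \<beta> / 2 * frob_sq n (D k)) \<longlonglongrightarrow> 0"
    proof (rule descent_gaps_tendsto_zero[where f = ?F])
      show "0 \<le> \<beta> / 2 * frob_sq n (D k)" for k
        using \<open>0 < \<beta>\<close> by (simp add: frob_sq_nonneg)
    qed (use that lower in auto)
    then have "(\<lambda>k. 2 / \<beta> * (\<beta> / 2 * frob_sq n (D k))) \<longlonglongrightarrow> 0"
      by (rule tendsto_mult_right_zero)
    then show ?thesis
      using \<open>0 < \<beta>\<close> by simp
  qed
  show "(\<lambda>k. S k m i j - S (Suc k) m i j) \<longlonglongrightarrow> 0" if "m < M" "i < N" "j < N"
  proof -
    have "(\<lambda>k. frob_sq N (\<lambda>a b. S k m a b - S (Suc k) m a b)) \<longlonglongrightarrow> 0"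
      by (rule gap_to_zero) (rule objective_descent(1)[OF run less_imp_le[OF \<open>0 < \<beta>\<close>] that(1)])
    from entry_tendsto_zero_if_frob_sq_tendsto_zero[OF this that(2,3)] show ?thesis .
  qed
  show "(\<lambda>k. T k i j - T (Suc k) i j) \<longlonglongrightarrow> 0" if "i < M" "j < M"
  proof -
    have "(\<lambda>k. frob_sq M (\<lambda>a b. T k a b - T (Suc k) a b)) \<longlonglongrightarrow> 0"
      by (rule gap_to_zero) (rule objective_descent(2)[OF run less_imp_le[OF \<open>0 < \<beta>\<close>]])
    from entry_tendsto_zero_if_frob_sq_tendsto_zero[OF this that] show ?thesis .
  qed
qed

lemma objective_tendsto:
  assumes "\<forall>m<M. mat_tendsto N (\<lambda>k. A k m) (Ls m)" and "mat_tendsto M B Lt"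
  shows "(\<lambda>k. objective N M K X \<beta> (A k) (B k)) \<longlonglongrightarrow> objective N M K X \<beta> Ls Lt"
  using assms unfolding objective_def temporal_smooth_eq_frob_inner spatial_smooth_eq_frob_inner
    frob_inner_def frob_sq_def mat_tendsto_def
  by (intro tendsto_intros) auto

section \<open>Stationarity of limit points\<close>

lemma limit_point_block_optimal:
  assumes run: "spateogl_run N M K X \<beta> S T" and "0 < \<beta>" and lim: "is_limit_point N M S T Ls Lt"
  shows "feasible N M Ls Lt"
    and "m < M \<Longrightarrow> L \<in> lap_set N \<Longrightarrow> objective N M K X \<beta> Ls Lt \<le> objective N M K X \<beta> (Ls(m := L)) Lt"
    and "L \<in> lap_set M \<Longrightarrow> objective N M K X \<beta> Ls Lt \<le> objective N M K X \<beta> Ls L"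
proof -
  obtain r where "strict_mono r"
    and S_lim: "\<forall>m<M. mat_tendsto N (\<lambda>k. S (r k) m) (Ls m)" and T_lim: "mat_tendsto M (\<lambda>k. T (r k)) Lt"
    using lim unfolding is_limit_point_def mat_tendsto_def by blast
  have S_lim_next: "\<forall>m<M. mat_tendsto N (\<lambda>k. S (Suc (r k)) m) (Ls m)"
  proof (unfold mat_tendsto_def, intro allI impI)
    fix m i j assume "m < M" "i < N" "j < N"
    then have "(\<lambda>k. S (r k) m i j - S (Suc (r k)) m i j) \<longlonglongrightarrow> 0"
      using LIMSEQ_subseq_LIMSEQ[OF spateogl_run_steps_tendsto_zero(1)[OF run \<open>0 < \<beta>\<close>] \<open>strict_mono r\<close>]
      by (simp add: o_def)
    moreover have "(\<lambda>k. S (r k) m i j) \<longlonglongrightarrow> Ls m i j"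
      using S_lim \<open>m < M\<close> \<open>i < N\<close> \<open>j < N\<close> unfolding mat_tendsto_def by blast
    ultimately show "(\<lambda>k. S (Suc (r k)) m i j) \<longlonglongrightarrow> Ls m i j"
      using tendsto_diff by fastforce
  qed
  have T_lim_next: "mat_tendsto M (\<lambda>k. T (Suc (r k))) Lt"
  proof (unfold mat_tendsto_def, intro allI impI)
    fix i j assume "i < M" "j < M"
    then have "(\<lambda>k. T (r k) i j - T (Suc (r k)) i j) \<longlonglongrightarrow> 0"
      using LIMSEQ_subseq_LIMSEQ[OF spateogl_run_steps_tendsto_zero(2)[OF run \<open>0 < \<beta>\<close>] \<open>strict_mono r\<close>]
      by (simp add: o_def)
    moreover have "(\<lambda>k. T (r k) i j) \<longlonglongrightarrow> Lt i j"
      using T_lim \<open>i < M\<close> \<open>j < M\<close> unfolding mat_tendsto_def by blast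
    ultimately show "(\<lambda>k. T (Suc (r k)) i j) \<longlonglongrightarrow> Lt i j"
      using tendsto_diff by fastforce
  qed
  have feasible: "m < M \<Longrightarrow> S k m \<in> lap_set N" "T k \<in> lap_set M" for k m
    using spateogl_run_feasible[OF run] unfolding feasible_def by auto
  have "Ls m \<in> lap_set N" if "m < M" for m
    using lap_set_closed[unfolded mat_closed_def, rule_format,
        where n = N and A = "\<lambda>k. S (r k) m" and B = "Ls m"]
      feasible(1)[OF that] S_lim that lim unfolding is_limit_point_def by blast
  moreover have "Lt \<in> lap_set M"
    using lap_set_closed[unfolded mat_closed_def, rule_format,
        where n = M and A = "\<lambda>k. T (r k)" and B = Lt]
      feasible(2) T_lim lim unfolding is_limit_point_def by blast
  ultimately show "feasible N M Ls Lt"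
    unfolding feasible_def by blast
  show "objective N M K X \<beta> Ls Lt \<le> objective N M K X \<beta> (Ls(m := L)) Lt"
    if "m < M" "L \<in> lap_set N"
  proof (rule LIMSEQ_le)
    let ?sweep = "\<lambda>k. sweep S (r k) (Suc m)"
    have "mat_tendsto N (\<lambda>k. ?sweep k m') (Ls m')" if "m' < M" for m'
      using S_lim S_lim_next that by (cases "m' < Suc m") (simp_all add: sweep_def)
    then show "(\<lambda>k. objective N M K X \<beta> (?sweep k) (T (r k))) \<longlonglongrightarrow> objective N M K X \<beta> Ls Lt"
      and "(\<lambda>k. objective N M K X \<beta> ((?sweep k)(m := L)) (T (r k)))
        \<longlonglongrightarrow> objective N M K X \<beta> (Ls(m := L)) Lt"
      using T_lim by (auto intro!: objective_tendsto simp: mat_tendsto_def)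
    show "\<exists>k0. \<forall>k\<ge>k0.
        objective N M K X \<beta> (?sweep k) (T (r k)) \<le> objective N M K X \<beta> ((?sweep k)(m := L)) (T (r k))"
      using spatial_update_descent(2)[OF run that] by blast
  qed
  show "objective N M K X \<beta> Ls Lt \<le> objective N M K X \<beta> Ls L" if "L \<in> lap_set M"
  proof (rule LIMSEQ_le)
    show "(\<lambda>k. objective N M K X \<beta> (S (Suc (r k))) (T (Suc (r k)))) \<longlonglongrightarrow> objective N M K X \<beta> Ls Lt"
      and "(\<lambda>k. objective N M K X \<beta> (S (Suc (r k))) L) \<longlonglongrightarrow> objective N M K X \<beta> Ls L"
      using S_lim_next T_lim_next by (auto intro!: objective_tendsto simp: mat_tendsto_def)
    show "\<exists>k0. \<forall>k\<ge>k0.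
        objective N M K X \<beta> (S (Suc (r k))) (T (Suc (r k))) \<le> objective N M K X \<beta> (S (Suc (r k))) L"
      using temporal_update_descent(2)[OF run that] by blast
  qed
qed

definition objective_deriv ::
  "nat \<Rightarrow> nat \<Rightarrow> (nat \<Rightarrow> nat) \<Rightarrow> (nat \<Rightarrow> mat) \<Rightarrow> real \<Rightarrow> (nat \<Rightarrow> mat) \<Rightarrow> mat \<Rightarrow> (nat \<Rightarrow> mat) \<Rightarrow> mat \<Rightarrow> real" where
  "objective_deriv N M K X \<beta> Ls Lt D E =
     (\<Sum>m<M. frob_inner N (D m) (gram (K m) (X m)))
     + \<beta> * (\<Sum>m<M. frob_inner N (Ls m) (D m) + frob_inner N (D m) (Ls m))
     + (\<Sum>i<M. \<Sum>j<M. E i j * frob_inner N (Ls i) (Ls j)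
          + Lt i j * (frob_inner N (Ls i) (D j) + frob_inner N (D i) (Ls j)))
     + \<beta> * (frob_inner M Lt E + frob_inner M E Lt)"

lemma frob_inner_line_left:
  "frob_inner n (\<lambda>a b. A a b + t * B a b) C = frob_inner n A C + t * frob_inner n B C"
  unfolding frob_inner_def by (simp add: algebra_simps sum.distrib sum_distrib_left)

lemma frob_inner_line_right:
  "frob_inner n C (\<lambda>a b. A a b + t * B a b) = frob_inner n C A + t * frob_inner n C B"
  unfolding frob_inner_def by (simp add: algebra_simps sum.distrib sum_distrib_left)

lemma objective_has_derivative:
  "((\<lambda>t. objective N M K X \<beta> (\<lambda>m a b. Ls m a b + t * D m a b) (\<lambda>a b. Lt a b + t * E a b))
     has_real_derivative objective_deriv N M K X \<beta> Ls Lt D E) (at 0)"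
  unfolding objective_def spatial_smooth_eq_frob_inner temporal_smooth_eq_frob_inner frob_sq_eq_frob_inner
    frob_inner_line_left frob_inner_line_right objective_deriv_def
  by (auto intro!: derivative_eq_intros simp: sum.distrib algebra_simps)

definition spatial_block :: "(nat \<Rightarrow> mat) \<Rightarrow> nat \<Rightarrow> nat \<Rightarrow> mat" where
  "spatial_block D m = (\<lambda>j. if j = m then D m else (\<lambda>a b. 0))"

lemma frob_inner_spatial_block:
  "frob_inner n (spatial_block D m j) C = (if j = m then frob_inner n (D m) C else 0)"
  "frob_inner n C (spatial_block D m j) = (if j = m then frob_inner n C (D m) else 0)"
  by (simp_all add: spatial_block_def frob_inner_def)

lemma frob_inner_zero [simp]: "frob_inner n (\<lambda>a b. 0) C = 0" "frob_inner n C (\<lambda>a b. 0) = 0"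
  by (simp_all add: frob_inner_def)

lemma objective_deriv_block_decomp:
  "objective_deriv N M K X \<beta> Ls Lt D E =
    (\<Sum>m<M. objective_deriv N M K X \<beta> Ls Lt (spatial_block D m) (\<lambda>a b. 0))
    + objective_deriv N M K X \<beta> Ls Lt (\<lambda>m a b. 0) E"
proof -
  have "(\<Sum>m<M. \<Sum>i<M. \<Sum>j<M. Lt i j * (frob_inner N (Ls i) (spatial_block D m j)
      + frob_inner N (spatial_block D m i) (Ls j)))
    = (\<Sum>i<M. \<Sum>j<M. Lt i j * (frob_inner N (Ls i) (D j) + frob_inner N (D i) (Ls j)))"
    by (simp add: sum_rotate3[where A = "{..<M}"] frob_inner_spatial_block distrib_left sum.distrib
        if_distrib[of "\<lambda>x. _ * x"] cong: if_cong) (rule sum.swap)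
  then show ?thesis
    unfolding objective_deriv_def
    by (simp add: frob_inner_spatial_block sum.distrib sum_distrib_left[symmetric]
        if_distrib[of "\<lambda>x. _ * x"] cong: if_cong)
qed

lemma has_real_derivative_nonneg_if_right_min:
  assumes d: "(f has_real_derivative d) (at x)" and "0 < \<delta>"
    and right_min: "\<And>t. 0 < t \<Longrightarrow> t < \<delta> \<Longrightarrow> f x \<le> f (x + t)"
  shows "0 \<le> d"
proof (rule ccontr)
  assume "\<not> 0 \<le> d"
  then obtain e where "0 < e" and decrease: "\<And>h. 0 < h \<Longrightarrow> h < e \<Longrightarrow> f (x + h) < f x"
    using DERIV_neg_dec_right[OF d] by force
  let ?h = "min e \<delta> / 2"
  have "f (x + ?h) < f x"
    using decrease \<open>0 < e\<close> \<open>0 < \<delta>\<close> by simp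
  moreover have "f x \<le> f (x + ?h)"
    using right_min \<open>0 < e\<close> \<open>0 < \<delta>\<close> by simp
  ultimately show False
    by simp
qed

lemma stationary_if_block_optimal:
  assumes feasible: "feasible N M Ls Lt"
    and spatial_opt: "\<And>m L. m < M \<Longrightarrow> L \<in> lap_set N \<Longrightarrow>
      objective N M K X \<beta> Ls Lt \<le> objective N M K X \<beta> (Ls(m := L)) Lt"
    and temporal_opt: "\<And>L. L \<in> lap_set M \<Longrightarrow> objective N M K X \<beta> Ls Lt \<le> objective N M K X \<beta> Ls L"
  shows "stationary N M K X \<beta> Ls Lt"
  unfolding stationary_def
proof (intro conjI allI impI feasible)
  fix Ls' Lt'
  assume feasible': "feasible N M Ls' Lt'"
  define D where "D m a b = Ls' m a b - Ls m a b" for m a b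
  define E where "E a b = Lt' a b - Lt a b" for a b
  let ?F = "\<lambda>Ls Lt. objective N M K X \<beta> Ls Lt"
  let ?dF = "objective_deriv N M K X \<beta> Ls Lt"
  have spatial_block_nonneg: "0 \<le> ?dF (spatial_block D m) (\<lambda>a b. 0)" if "m < M" for m
  proof (rule has_real_derivative_nonneg_if_right_min[OF objective_has_derivative zero_less_one])
    fix t :: real
    assume "0 < t" "t < 1"
    then have "mat_segment (Ls m) (Ls' m) t \<in> lap_set N"
      using lap_set_convex feasible feasible' that unfolding mat_convex_def feasible_def by auto
    moreover have "(\<lambda>j a b. Ls j a b + (0 + t) * spatial_block D m j a b) =
        Ls(m := mat_segment (Ls m) (Ls' m) t)"
      by (auto simp: spatial_block_def D_def mat_segment_def)
    ultimately show "?F (\<lambda>j a b. Ls j a b + 0 * spatial_block D m j a b) (\<lambda>a b. Lt a b + 0 * 0)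
        \<le> ?F (\<lambda>j a b. Ls j a b + (0 + t) * spatial_block D m j a b) (\<lambda>a b. Lt a b + (0 + t) * 0)"
      using spatial_opt[OF that] by simp
  qed
  have temporal_block_nonneg: "0 \<le> ?dF (\<lambda>m a b. 0) E"
  proof (rule has_real_derivative_nonneg_if_right_min[OF objective_has_derivative zero_less_one])
    fix t :: real
    assume "0 < t" "t < 1"
    then have "mat_segment Lt Lt' t \<in> lap_set M"
      using lap_set_convex feasible feasible' unfolding mat_convex_def feasible_def by auto
    moreover have "(\<lambda>a b. Lt a b + (0 + t) * E a b) = mat_segment Lt Lt' t"
      by (auto simp: E_def mat_segment_def)
    ultimately show "?F (\<lambda>m a b. Ls m a b + 0 * 0) (\<lambda>a b. Lt a b + 0 * E a b)
        \<le> ?F (\<lambda>m a b. Ls m a b + (0 + t) * 0) (\<lambda>a b. Lt a b + (0 + t) * E a b)"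
      using temporal_opt by simp
  qed
  have "((\<lambda>t. ?F (\<lambda>m i j. Ls m i j + t * (Ls' m i j - Ls m i j)) (\<lambda>i j. Lt i j + t * (Lt' i j - Lt i j)))
      has_real_derivative ?dF D E) (at 0)"
    using objective_has_derivative[of N M K X \<beta> Ls D Lt E] unfolding D_def E_def .
  moreover have "0 \<le> ?dF D E"
    unfolding objective_deriv_block_decomp[of N M K X \<beta> Ls Lt D E]
    using spatial_block_nonneg temporal_block_nonneg by (intro add_nonneg_nonneg sum_nonneg) auto
  ultimately show "\<exists>d. ((\<lambda>t. ?F (\<lambda>m i j. Ls m i j + t * (Ls' m i j - Ls m i j))
      (\<lambda>i j. Lt i j + t * (Lt' i j - Lt i j))) has_real_derivative d) (at 0) \<and> 0 \<le> d"
    by blast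
qed

theorem theorem1:
  fixes N M :: nat and K :: "nat \<Rightarrow> nat" and X :: "nat \<Rightarrow> mat" and \<beta> :: real
  assumes "1 \<le> N" and "1 \<le> M" and "0 < \<beta>"
    and "lap_set N \<noteq> {}" and "lap_set M \<noteq> {}"
  shows
    "(\<forall>Ls Lt. Lt \<in> lap_set M \<longrightarrow>
        temporal_smooth N M Ls Lt =
          (\<Sum>i<M. \<Sum>j\<in>{i<..<M}. tweight Lt i j * frob_sq N (\<lambda>a b. Ls i a b - Ls j a b)))
     \<and> (\<forall>Ls Lt m. feasible N M Ls Lt \<and> m < M \<longrightarrow>
          (\<exists>!L. is_argmin (lap_set N) (spatial_subobj N M K X \<beta> Ls Lt m) L))
     \<and> (\<forall>Ls. (\<forall>m<M. Ls m \<in> lap_set N) \<longrightarrow>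
          (\<exists>!L. is_argmin (lap_set M) (temporal_subobj N M \<beta> Ls) L))
     \<and> (\<forall>S T. spateogl_run N M K X \<beta> S T \<longrightarrow>
          (\<forall>k. objective N M K X \<beta> (S (Suc k)) (T (Suc k)) \<le> objective N M K X \<beta> (S k) (T k))
          \<and> (\<forall>Ls Lt. is_limit_point N M S T Ls Lt \<longrightarrow> stationary N M K X \<beta> Ls Lt))"
proof (intro conjI allI impI)
  show "temporal_smooth N M Ls Lt =
      (\<Sum>i<M. \<Sum>j\<in>{i<..<M}. tweight Lt i j * frob_sq N (\<lambda>a b. Ls i a b - Ls j a b))"
    if "Lt \<in> lap_set M" for Ls Lt
    using temporal_smooth_eq_weighted_sum[OF that] .
  show "\<exists>!L. is_argmin (lap_set N) (spatial_subobj N M K X \<beta> Ls Lt m) L"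
    if "feasible N M Ls Lt \<and> m < M" for Ls Lt m
    using spatial_subproblem_ex1_argmin[OF \<open>0 < \<beta>\<close> \<open>lap_set N \<noteq> {}\<close>] that unfolding feasible_def by blast
  show "\<exists>!L. is_argmin (lap_set M) (temporal_subobj N M \<beta> Ls) L" for Ls
    using temporal_subproblem_ex1_argmin[OF \<open>0 < \<beta>\<close> \<open>lap_set M \<noteq> {}\<close>] .
  fix S T
  assume run: "spateogl_run N M K X \<beta> S T"
  show "objective N M K X \<beta> (S (Suc k)) (T (Suc k)) \<le> objective N M K X \<beta> (S k) (T k)" for k
    using objective_descent(3)[OF run] \<open>0 < \<beta>\<close> by simp
  show "stationary N M K X \<beta> Ls Lt" if "is_limit_point N M S T Ls Lt" for Ls Lt
    using limit_point_block_optimal[OF run \<open>0 < \<beta>\<close> that] by (rule stationary_if_block_optimal)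
qed

end
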